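(* Let $q$ be a prime power and let $f,g:\mathbb{N}\to\mathbb{C}$ be functions, neither identically zero, such that \[ g(n)=\sum_{k=1}^{n}\binom{n-1}{k-1}_q f(k)\quad\text{for all } n\in\mathbb{N}. \] Then at least one of $\{n: f(n)\neq0\}$ and $\{n:g(n)\neq 0\}$ is infinite.
   Context: The $q$-binomial coefficient is $\binom{n}{k}_q=\frac{[n]!_q}{[k]!_q[n-k]!_q}$ where $[n]!_q=\prod_{d=1}^n\frac{q^d-1}{q-1}$. *)

theory Defs
  imports "HOL-Analysis.Analysis" "HOL-Computational_Algebra.Primes"
begin

definition qfact :: "nat \<Rightarrow> nat \<Rightarrow> complex" where
  "qfact q n = (\<Prod>d=1..n. (of_nat q ^ d - 1) / (of_nat q - 1))"

text \<open>q-binomial coefficient binom(n,k)_q = [n]!_q / ([k]!_q [n-k]!_q) (used only for k \<le> n).\<close>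
definition qbinom :: "nat \<Rightarrow> nat \<Rightarrow> nat \<Rightarrow> complex" where
  "qbinom q n k = qfact q n / (qfact q k * qfact q (n - k))"

definition prime_power :: "nat \<Rightarrow> bool" where
  "prime_power q \<longleftrightarrow> (\<exists>p e. prime p \<and> e \<ge> 1 \<and> q = p ^ e)"

end

theory Submission
  imports Defs "HOL-Computational_Algebra.Polynomial"
begin

text \<open>For \<open>q \<ge> 2\<close> and \<open>j \<le> n\<close>, the q-binomial coefficient \<open>binom(n,j)_q\<close> is the value at
  \<open>x = q^n\<close> of a polynomial \<open>P_j\<close> of degree exactly \<open>j\<close> that does not depend on \<open>n\<close>.
  If \<open>f\<close> had finite support with last nonzero value \<open>f(M+1)\<close>, then for all large \<open>n\<close>
  we would get \<open>g(n+1) = G(q^n)\<close> with \<open>G = \<Sum>j\<le>M. f(j+1) P_j\<close>, a polynomial of degree \<open>M\<close>,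
  hence nonzero. So \<open>G(q^n) \<noteq> 0\<close> for all but finitely many \<open>n\<close>, and \<open>g\<close> cannot have
  finite support as well.\<close>

lemma prime_power_ge_2: "prime_power q \<Longrightarrow> q \<ge> 2"
proof -
  assume "prime_power q"
  then obtain p e where "prime p" "e \<ge> 1" "q = p ^ e"
    unfolding prime_power_def by blast
  then show "q \<ge> 2"
    using prime_ge_2_nat[of p] self_le_power[of p e] by simp
qed

lemma of_nat_power_minus_1_nonzero:
  assumes "q \<ge> 2" "d \<ge> 1"
  shows "(of_nat q :: 'a :: ring_char_0) ^ d - 1 \<noteq> 0"
proof
  assume "(of_nat q :: 'a) ^ d - 1 = 0"
  then have "q ^ d = 1"
    by (metis eq_iff_diff_eq_0 of_nat_1 of_nat_eq_iff of_nat_power)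
  with assms show False by simp
qed

lemma qfact_Suc: "qfact q (Suc k) = qfact q k * ((of_nat q ^ Suc k - 1) / (of_nat q - 1))"
  unfolding qfact_def by (simp add: prod.cl_ivl_Suc mult.commute)

lemma qfact_nonzero:
  assumes "q \<ge> 2"
  shows "qfact q k \<noteq> 0"
proof (induction k)
  case 0
  then show ?case by (simp add: qfact_def)
next
  case (Suc k)
  with of_nat_power_minus_1_nonzero[OF assms, of 1, where 'a = complex]
    of_nat_power_minus_1_nonzero[OF assms, of "Suc k", where 'a = complex]
  show ?case by (simp only: qfact_Suc) simp
qed

lemma qbinom_Suc:
  assumes "q \<ge> 2" "j < n"
  shows "qbinom q n (Suc j) = qbinom q n j * ((of_nat q ^ (n - j) - 1) / (of_nat q ^ Suc j - 1))"
proof -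
  obtain r where r: "n - j = Suc r" "n - Suc j = r"
    using assms(2) by (metis Suc_diff_Suc diff_Suc_Suc)
  have cancel: "F / (A * (x / c) * B) = F / (A * (B * (y / c))) * (y / x)"
    if "A \<noteq> 0" "B \<noteq> 0" "x \<noteq> 0" "y \<noteq> 0" "c \<noteq> 0" for F A B x y c :: complex
    using that by (simp add: field_simps)
  show ?thesis
    unfolding qbinom_def r qfact_Suc
    by (rule cancel)
      (use assms(1) qfact_nonzero[OF assms(1)] of_nat_power_minus_1_nonzero[OF assms(1), where 'a = complex]
        in \<open>simp_all del: power_Suc\<close>)
qed

lemma qbinom_eq_prod:
  assumes "q \<ge> 2" "j \<le> n"
  shows "qbinom q n j = (\<Prod>i<j. (of_nat q ^ (n - i) - 1) / (of_nat q ^ Suc i - 1))"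
  using assms(2)
proof (induction j)
  case 0
  then show ?case using qfact_nonzero[OF assms(1), of n] by (simp add: qbinom_def qfact_def)
next
  case (Suc j)
  then show ?case by (simp add: qbinom_Suc[OF assms(1)])
qed

definition qbinom_factor :: "nat \<Rightarrow> nat \<Rightarrow> complex poly" where
  "qbinom_factor q i = smult (1 / (of_nat q ^ i * (of_nat q ^ Suc i - 1))) [:- (of_nat q ^ i), 1:]"

definition qbinom_poly :: "nat \<Rightarrow> nat \<Rightarrow> complex poly" where
  "qbinom_poly q j = (\<Prod>i<j. qbinom_factor q i)"

lemma poly_qbinom_factor:
  "poly (qbinom_factor q i) x = (x - of_nat q ^ i) / (of_nat q ^ i * (of_nat q ^ Suc i - 1))"
  by (simp add: qbinom_factor_def divide_inverse algebra_simps del: power_Suc)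

lemma poly_qbinom_factor_at_power:
  assumes "q \<ge> 2" "i \<le> n"
  shows "poly (qbinom_factor q i) (of_nat q ^ n) = (of_nat q ^ (n - i) - 1) / (of_nat q ^ Suc i - 1)"
proof -
  define x y c :: complex
    where "x = of_nat q ^ i" and "y = of_nat q ^ (n - i)" and "c = of_nat q ^ Suc i - 1"
  have "x \<noteq> 0"
    using assms(1) by (simp add: x_def)
  have "poly (qbinom_factor q i) (of_nat q ^ n) = (x * y - x) / (x * c)"
    using assms(2) by (simp add: poly_qbinom_factor x_def y_def c_def flip: power_add)
  also have "\<dots> = (x * (y - 1)) / (x * c)"
    by (simp add: algebra_simps)
  also have "\<dots> = (y - 1) / c"
    using \<open>x \<noteq> 0\<close> by simp
  finally show ?thesis
    by (simp add: y_def c_def)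
qed

lemma qbinom_factor_nonzero_degree:
  assumes "q \<ge> 2"
  shows "qbinom_factor q i \<noteq> 0" "degree (qbinom_factor q i) = 1"
proof -
  have "(of_nat q :: complex) ^ i \<noteq> 0"
    using assms by simp
  moreover have "(of_nat q :: complex) ^ Suc i - 1 \<noteq> 0"
    by (rule of_nat_power_minus_1_nonzero[OF assms]) simp
  ultimately have "1 / ((of_nat q :: complex) ^ i * (of_nat q ^ Suc i - 1)) \<noteq> 0"
    by (simp only: divide_eq_0_iff mult_eq_0_iff one_neq_zero) simp
  then show "qbinom_factor q i \<noteq> 0" "degree (qbinom_factor q i) = 1"
    unfolding qbinom_factor_def by (simp_all del: power_Suc)
qed

lemma poly_qbinom_poly:
  assumes "q \<ge> 2" "j \<le> n"
  shows "poly (qbinom_poly q j) (of_nat q ^ n) = qbinom q n j"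
  unfolding qbinom_poly_def poly_prod qbinom_eq_prod[OF assms]
  using assms by (intro prod.cong refl poly_qbinom_factor_at_power) auto

lemma qbinom_poly_nonzero_degree:
  assumes "q \<ge> 2"
  shows "qbinom_poly q j \<noteq> 0" "degree (qbinom_poly q j) = j"
  unfolding qbinom_poly_def
  using qbinom_factor_nonzero_degree[OF assms] by (simp_all add: degree_prod_eq_sum_degree)

lemma sum_smult_nonzero_if_degree_eq_index:
  fixes p :: "nat \<Rightarrow> 'a :: idom poly"
  assumes "\<And>j. degree (p j) = j" "p M \<noteq> 0" "c M \<noteq> 0"
  shows "(\<Sum>j\<le>M. smult (c j) (p j)) \<noteq> 0"
proof -
  have "coeff (\<Sum>j\<le>M. smult (c j) (p j)) M = (\<Sum>j\<le>M. c j * coeff (p j) M)"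
    by (simp add: coeff_sum)
  also have "\<dots> = (\<Sum>j\<in>{M}. c j * coeff (p j) M)"
    using assms(1) by (intro sum.mono_neutral_right) (auto simp: coeff_eq_0)
  also have "\<dots> = c M * lead_coeff (p M)"
    using assms(1) by simp
  also have "\<dots> \<noteq> 0"
    using assms(2,3) by simp
  finally show ?thesis
    by auto
qed

lemma poly_eq_0_if_zero_at_powers:
  fixes p :: "'a :: {idom, ring_char_0} poly"
  assumes "q \<ge> 2" "\<And>n. n \<ge> N \<Longrightarrow> poly p (of_nat q ^ n) = 0"
  shows "p = 0"
proof (rule ccontr)
  assume "p \<noteq> 0"
  have "inj (\<lambda>n. (of_nat q :: 'a) ^ n)"
  proof (rule injI)
    fix m n
    assume "(of_nat q :: 'a) ^ m = of_nat q ^ n"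
    then have "q ^ m = q ^ n"
      by (metis of_nat_eq_iff of_nat_power)
    with assms(1) show "m = n"
      by simp
  qed
  then have "infinite ((\<lambda>n. (of_nat q :: 'a) ^ n) ` {N..})"
    by (meson finite_imageD infinite_Ici inj_on_subset subset_UNIV)
  moreover have "(\<lambda>n. (of_nat q :: 'a) ^ n) ` {N..} \<subseteq> {x. poly p x = 0}"
    using assms(2) by auto
  ultimately show False
    using poly_roots_finite[OF \<open>p \<noteq> 0\<close>] finite_subset by blast
qed

lemma qbinom_transform_eq_poly:
  fixes f :: "nat \<Rightarrow> complex"
  assumes "q \<ge> 2" "\<And>k. k > Suc M \<Longrightarrow> f k = 0" "M \<le> n"
  shows "(\<Sum>k=1..Suc n. qbinom q n (k - 1) * f k)
    = poly (\<Sum>j\<le>M. smult (f (Suc j)) (qbinom_poly q j)) (of_nat q ^ n)"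
proof -
  have "(\<Sum>k=1..Suc n. qbinom q n (k - 1) * f k) = (\<Sum>j\<le>n. qbinom q n j * f (Suc j))"
    unfolding One_nat_def sum.atLeast_Suc_atMost_Suc_shift by (simp add: atMost_atLeast0)
  also have "\<dots> = (\<Sum>j\<le>M. qbinom q n j * f (Suc j))"
    using assms(2,3) by (intro sum.mono_neutral_right) auto
  also have "\<dots> = poly (\<Sum>j\<le>M. smult (f (Suc j)) (qbinom_poly q j)) (of_nat q ^ n)"
    using assms(1,3) by (simp add: poly_sum poly_qbinom_poly mult.commute)
  finally show ?thesis .
qed

lemma finite_support_obtain_last:
  fixes f :: "nat \<Rightarrow> 'a :: zero"
  assumes "finite {n. n \<ge> 1 \<and> f n \<noteq> 0}" "\<exists>n\<ge>1. f n \<noteq> 0"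
  obtains M where "f (Suc M) \<noteq> 0" "\<And>k. k > Suc M \<Longrightarrow> f k = 0"
proof -
  define m where "m = Max {n. n \<ge> 1 \<and> f n \<noteq> 0}"
  have "m \<ge> 1" "f m \<noteq> 0"
    using Max_in[OF assms(1)] assms(2) by (auto simp: m_def)
  moreover have "f k = 0" if "k > m" for k
    using Max_ge[OF assms(1), of k] that by (force simp: m_def)
  ultimately show thesis
    using that[of "m - 1"] by simp
qed

lemma finite_support_obtain_bound:
  fixes f :: "nat \<Rightarrow> 'a :: zero"
  assumes "finite {n. n \<ge> 1 \<and> f n \<noteq> 0}"
  obtains N where "\<And>n. n > N \<Longrightarrow> f n = 0"
proof -
  obtain N where bound: "\<forall>n \<in> {n. n \<ge> 1 \<and> f n \<noteq> 0}. n \<le> N"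
    using assms finite_nat_set_iff_bounded_le by blast
  have "f n = 0" if "n > N" for n
  proof (rule ccontr)
    assume "f n \<noteq> 0"
    with bound that have "n \<le> N"
      by simp
    with that show False
      by simp
  qed
  then show thesis
    using that by blast
qed

theorem proposition5p2:
  fixes q :: nat and f g :: "nat \<Rightarrow> complex"
  assumes "prime_power q"
    and "\<exists>n\<ge>1. f n \<noteq> 0"
    and "\<exists>n\<ge>1. g n \<noteq> 0"
    and "\<And>n. n \<ge> 1 \<Longrightarrow> g n = (\<Sum>k=1..n. qbinom q (n - 1) (k - 1) * f k)"
  shows "infinite {n. n \<ge> 1 \<and> f n \<noteq> 0} \<or> infinite {n. n \<ge> 1 \<and> g n \<noteq> 0}"
proof (rule ccontr)
  assume "\<not> ?thesis"
  then have fin_f: "finite {n. n \<ge> 1 \<and> f n \<noteq> 0}" and fin_g: "finite {n. n \<ge> 1 \<and> g n \<noteq> 0}"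
    by auto
  have q: "q \<ge> 2"
    using assms(1) by (rule prime_power_ge_2)
  obtain M where f_last: "f (Suc M) \<noteq> 0" and f_vanish: "\<And>k. k > Suc M \<Longrightarrow> f k = 0"
    using finite_support_obtain_last[OF fin_f assms(2)] by blast
  obtain N where g_vanish: "\<And>n. n > N \<Longrightarrow> g n = 0"
    using finite_support_obtain_bound[OF fin_g] by blast
  define G where "G = (\<Sum>j\<le>M. smult (f (Suc j)) (qbinom_poly q j))"
  have "poly G (of_nat q ^ n) = 0" if "n \<ge> max M N" for n
  proof -
    have "poly G (of_nat q ^ n) = g (Suc n)"
      using assms(4)[of "Suc n"] qbinom_transform_eq_poly[where f = f and M = M, OF q f_vanish, of n] that
      by (simp add: G_def)
    also have "\<dots> = 0"
      using g_vanish that by simp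
    finally show ?thesis .
  qed
  then have "G = 0"
    by (rule poly_eq_0_if_zero_at_powers[OF q])
  moreover have "G \<noteq> 0"
    unfolding G_def
    by (rule sum_smult_nonzero_if_degree_eq_index[where p = "qbinom_poly q" and c = "\<lambda>j. f (Suc j)"])
      (use qbinom_poly_nonzero_degree[OF q] f_last in auto)
  ultimately show False
    by contradiction
qed

end
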